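(* With $C$, $C^0=C\setminus C(\mathbb F_{p^2})$ and $\mathrm{End}(t)=\{A\in\mathrm{Mat}_3(\mathbb F_{p^2}):A\cdot t\in k\cdot t\}$ for $t\in C^0(k)$ (viewed as a column vector), one has \[\{t\in C^0(k):\mathrm{End}(t)\simeq\mathbb F_{p^6}\}=C^0(\mathbb F_{p^6}).\]
   Context: $k$ is algebraically closed of characteristic $p$ and $C\subset\mathbb P^2$ is the Fermat curve $X_1^{p+1}+X_2^{p+1}+X_3^{p+1}=0$. *)

theory Defs
  imports "HOL-Analysis.Analysis" "HOL-Computational_Algebra.Polynomial"
begin

definition alg_closed :: "'a::field itself \<Rightarrow> bool" where
  "alg_closed _ \<longleftrightarrow> (\<forall>q::'a poly. degree q > 0 \<longrightarrow> (\<exists>x. poly q x = 0))"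

text \<open>The subfield F_q of k (for q a power of the characteristic).\<close>
definition Fq :: "nat \<Rightarrow> 'a::field set" where
  "Fq q = {x. x ^ q = x}"

text \<open>Points of P^2 are represented by nonzero vectors in k^3.
  The projective point of t is F_q-rational iff some representative has coordinates in F_q.\<close>
definition rational_pt :: "nat \<Rightarrow> 'a::field ^ 3 \<Rightarrow> bool" where
  "rational_pt q t \<longleftrightarrow> (\<exists>c. c \<noteq> 0 \<and> (\<forall>i. c * t $ i \<in> Fq q))"

definition on_fermat :: "nat \<Rightarrow> 'a::field ^ 3 \<Rightarrow> bool" where
  "on_fermat p t \<longleftrightarrow> t \<noteq> 0 \<and> (\<Sum>i\<in>UNIV. (t $ i) ^ (p + 1)) = 0"

definition C0 :: "nat \<Rightarrow> 'a::field ^ 3 \<Rightarrow> bool" where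
  "C0 p t \<longleftrightarrow> on_fermat p t \<and> \<not> rational_pt (p ^ 2) t"

definition End_t :: "nat \<Rightarrow> 'a::field ^ 3 \<Rightarrow> ('a ^ 3 ^ 3) set" where
  "End_t p t = {A. (\<forall>i j. A $ i $ j \<in> Fq (p ^ 2)) \<and> (\<exists>c. A *v t = c *s t)}"

definition ring_iso_to :: "('a::field ^ 3 ^ 3) set \<Rightarrow> 'a set \<Rightarrow> bool" where
  "ring_iso_to R S \<longleftrightarrow> (\<exists>\<phi>. bij_betw \<phi> R S \<and>
     (\<forall>A\<in>R. \<forall>B\<in>R. \<phi> (A + B) = \<phi> A + \<phi> B \<and> \<phi> (A ** B) = \<phi> A * \<phi> B))"

end

theory Submission
  imports Defs "HOL-Computational_Algebra.Primes"
begin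

text \<open>
  Write F for the coordinatewise p-th power map on k^3. A matrix A with entries in F_{p^2}
  commutes with F^2, so from A t = c t one gets A (F^{2i} t) = c^{p^{2i}} F^{2i} t.

  If End(t) is isomorphic to F_{p^6}, it is a field; hence a nonzero element of End(t) does not
  kill t, an element of End(t) is determined by its eigenvalue on t, and all these eigenvalues lie
  in F_{p^6}. The preimage of an element of F_{p^6} - F_{p^2} is then an A whose eigenvalue c has
  three distinct conjugates c, c^{p^2}, c^{p^4}. So t, F^2 t, F^4 t are eigenvectors for distinct
  eigenvalues, hence a basis, and F^6 t, again an eigenvector for c, is proportional to t: the
  point is F_{p^6}-rational.

  Conversely, normalise t so that F^6 t = t. The Fermat equation says that t is orthogonal to F t,
  so consecutive vectors of the orbit F^j t are orthogonal; together with t not being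
  F_{p^2}-rational this forces t, F^2 t, F^4 t to be a basis. A matrix then lies in End(t) iff it
  is diagonal in this basis with eigenvalues c, c^{p^2}, c^{p^4} for some c in F_{p^6}, and the
  eigenvalue map A \<mapsto> c is the isomorphism.
\<close>

section \<open>Vector algebra in k^3\<close>

definition cross_prod :: "'a::comm_ring_1 ^ 3 \<Rightarrow> 'a ^ 3 \<Rightarrow> 'a ^ 3" where
  "cross_prod x y = vector [x$2 * y$3 - x$3 * y$2, x$3 * y$1 - x$1 * y$3, x$1 * y$2 - x$2 * y$1]"

definition dot_prod :: "'a::comm_semiring_0 ^ 'n \<Rightarrow> 'a ^ 'n \<Rightarrow> 'a" where
  "dot_prod x y = (\<Sum>i\<in>UNIV. x$i * y$i)"

definition triple_prod :: "'a::comm_ring_1 ^ 3 \<Rightarrow> 'a ^ 3 \<Rightarrow> 'a ^ 3 \<Rightarrow> 'a" where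
  "triple_prod x y z = dot_prod x (cross_prod y z)"

lemma cross_prod_component [simp]:
  "cross_prod x y $ 1 = x$2 * y$3 - x$3 * y$2"
  "cross_prod x y $ 2 = x$3 * y$1 - x$1 * y$3"
  "cross_prod x y $ 3 = x$1 * y$2 - x$2 * y$1"
  by (simp_all add: cross_prod_def)

lemma matrix_vector_mult_3:
  fixes M :: "'a::semiring_1 ^ 3 ^ 'm"
  shows "(M *v v) $ i = M$i$1 * v$1 + M$i$2 * v$2 + M$i$3 * v$3"
  by (simp add: matrix_vector_mult_def sum_3)

lemmas vec3_expand = vec_eq_iff forall_3 sum_3 dot_prod_def triple_prod_def matrix_vector_mult_3
  vector_smult_component vector_add_component vector_minus_component

lemma cross_prod_0 [simp]: "cross_prod 0 y = 0" "cross_prod x 0 = 0"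
  by (simp_all add: vec3_expand)

lemma dot_prod_0 [simp]: "dot_prod 0 y = 0" "dot_prod x 0 = 0"
  by (simp_all add: dot_prod_def)

lemma dot_prod_commute: "dot_prod x y = dot_prod y x"
  by (simp add: dot_prod_def mult.commute)

lemma dot_prod_add_smult_right:
  "dot_prod z (a *s x + b *s y) = a * dot_prod z x + b * dot_prod z y"
  by (simp add: dot_prod_def algebra_simps sum.distrib sum_distrib_left)

lemma cross_prod_cross_prod:
  "cross_prod (cross_prod x y) v = dot_prod x v *s y - dot_prod y v *s (x :: 'a::comm_ring_1^3)"
  by (simp add: vec3_expand algebra_simps)

lemma triple_prod_cyclic: "triple_prod x y z = triple_prod y z x"
  by (simp add: vec3_expand algebra_simps)

lemma triple_prod_repeated [simp]:
  "triple_prod x x z = 0" "triple_prod x y x = 0" "triple_prod x y y = 0"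
  by (simp_all add: vec3_expand algebra_simps)

lemma triple_prod_expansion:
  "triple_prod x y z *s v = triple_prod v y z *s x + triple_prod x v z *s y + triple_prod x y v *s z"
  for x y z v :: "'a::comm_ring_1^3"
  by (simp add: vec3_expand algebra_simps)

lemma cross_prod_smult_smult: "cross_prod (a *s x) (b *s x) = 0"
  by (simp add: vec3_expand algebra_simps)

lemma cross_prod_eq_0_imp_parallel:
  fixes x y :: "'a::field^3"
  assumes "x \<noteq> 0" "cross_prod x y = 0"
  shows "\<exists>l. y = l *s x"
proof -
  from assms(2) have e: "x$2 * y$3 = x$3 * y$2" "x$3 * y$1 = x$1 * y$3" "x$1 * y$2 = x$2 * y$1"
    by (auto simp: vec3_expand)
  from assms(1) obtain i where i: "x$i \<noteq> 0" by (auto simp: vec_eq_iff)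
  have "y = (y$i / x$i) *s x"
    using i e exhaust_3[of i] by (auto simp: vec3_expand field_simps)
  then show ?thesis by blast
qed

lemma independent_if_cross_prod_nonzero:
  fixes x y :: "'a::field^3"
  assumes "cross_prod x y \<noteq> 0" "a *s x + b *s y = 0"
  shows "a = 0" "b = 0"
proof -
  have "cross_prod (a *s x + b *s y) y = a *s cross_prod x y"
       "cross_prod x (a *s x + b *s y) = b *s cross_prod x y"
    by (simp_all add: vec3_expand algebra_simps)
  then show "a = 0" "b = 0" using assms by auto
qed

lemma parallel_cross_prod_if_orthogonal:
  fixes x y v :: "'a::field^3"
  assumes "cross_prod x y \<noteq> 0" "dot_prod x v = 0" "dot_prod y v = 0"
  shows "\<exists>l. v = l *s cross_prod x y"
  using cross_prod_eq_0_imp_parallel[OF assms(1)] cross_prod_cross_prod[of x y v] assms by simp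

lemma cross_prod_eq_0_if_orthogonal:
  fixes x y v w :: "'a::field^3"
  assumes "cross_prod x y \<noteq> 0"
    and "dot_prod x v = 0" "dot_prod y v = 0" "dot_prod x w = 0" "dot_prod y w = 0"
  shows "cross_prod v w = 0"
  using parallel_cross_prod_if_orthogonal[OF assms(1)] assms(2-5) cross_prod_smult_smult by metis

lemma independent_if_triple_prod_nonzero:
  fixes x y z :: "'a::field^3"
  assumes "triple_prod x y z \<noteq> 0" "a *s x + b *s y + c *s z = 0"
  shows "a = 0" "b = 0" "c = 0"
proof -
  have "triple_prod (a *s x + b *s y + c *s z) y z = a * triple_prod x y z"
       "triple_prod x (a *s x + b *s y + c *s z) z = b * triple_prod x y z"
       "triple_prod x y (a *s x + b *s y + c *s z) = c * triple_prod x y z"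
    by (simp_all add: vec3_expand algebra_simps)
  then show "a = 0" "b = 0" "c = 0" using assms by (auto simp: triple_prod_def)
qed

lemma in_span_if_triple_prod_eq_0:
  fixes x y z :: "'a::field^3"
  assumes "cross_prod x y \<noteq> 0" "triple_prod x y z = 0"
  shows "\<exists>a b. z = a *s x + b *s y"
proof -
  obtain i where i: "cross_prod x y $ i \<noteq> 0"
    using assms(1) by (auto simp: vec_eq_iff)
  define w :: "'a^3" where "w = axis i 1"
  have w: "triple_prod x y w \<noteq> 0"
    using i exhaust_3[of i] by (auto simp: w_def axis_def vec3_expand algebra_simps)
  have "triple_prod x y w *s z = triple_prod z y w *s x + triple_prod x z w *s y"
    using triple_prod_expansion[of x y w z] triple_prod_cyclic[of x y z] assms(2) by simp
  then have "z = (triple_prod z y w / triple_prod x y w) *s x + (triple_prod x z w / triple_prod x y w) *s y"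
    using w by (simp add: vec_eq_iff field_simps)
  then show ?thesis by blast
qed

lemma matrix_eq_if_triple_prod_nonzero:
  fixes A B :: "'a::field^3^3"
  assumes "triple_prod x y z \<noteq> 0" "A *v x = B *v x" "A *v y = B *v y" "A *v z = B *v z"
  shows "A = B"
proof -
  have "A *v v = B *v v" for v
  proof -
    have "A *v (triple_prod x y z *s v) = B *v (triple_prod x y z *s v)"
      unfolding triple_prod_expansion[of x y z v]
      by (simp add: matrix_vector_right_distrib vector_scalar_commute assms)
    then show ?thesis using assms(1) by (simp add: vector_scalar_commute)
  qed
  then show ?thesis by (simp add: matrix_eq)
qed

lemma exists_matrix_with_eigenbasis:
  fixes v0 v1 v2 :: "'a::field^3"
  assumes "triple_prod v0 v1 v2 \<noteq> 0"
  shows "\<exists>A::'a^3^3. A *v v0 = l0 *s v0 \<and> A *v v1 = l1 *s v1 \<and> A *v v2 = l2 *s v2"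
proof -
  define M :: "'a \<Rightarrow> 'a \<Rightarrow> 'a \<Rightarrow> 'a^3^3" where "M m0 m1 m2 = (\<chi> r s.
      m0 * v0$r * cross_prod v1 v2 $ s + m1 * v1$r * cross_prod v2 v0 $ s + m2 * v2$r * cross_prod v0 v1 $ s)"
    for m0 m1 m2
  \<comment> \<open>the cross products, scaled by 1 / triple_prod v0 v1 v2, form the dual basis of v0, v1, v2\<close>
  have "M m0 m1 m2 *v x = (m0 * triple_prod x v1 v2) *s v0 + (m1 * triple_prod v0 x v2) *s v1
      + (m2 * triple_prod v0 v1 x) *s v2" for m0 m1 m2 x
    unfolding M_def by (simp add: vec3_expand algebra_simps)
  then show ?thesis
    using assms triple_prod_cyclic[of v0 v1 v2] triple_prod_cyclic[of v1 v2 v0]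
    by (intro exI[of _ "M (l0 / triple_prod v0 v1 v2) (l1 / triple_prod v0 v1 v2) (l2 / triple_prod v0 v1 v2)"])
      simp
qed

lemma triple_prod_nonzero_if_eigenvalues_distinct:
  fixes A :: "'a::field^3^3"
  assumes eig: "A *v x = a *s x" "A *v y = b *s y" "A *v z = e *s z"
    and nz: "x \<noteq> 0" "y \<noteq> 0" "z \<noteq> 0" and "a \<noteq> b" "a \<noteq> e" "b \<noteq> e"
  shows "triple_prod x y z \<noteq> 0"
proof
  assume D: "triple_prod x y z = 0"
  show False
  proof (cases "cross_prod x y = 0")
    case True
    then obtain l where "y = l *s x" using cross_prod_eq_0_imp_parallel nz by blast
    then have "A *v y = a *s y" by (simp add: vector_scalar_commute eig vector_smult_assoc mult.commute)
    then show False using eig nz \<open>a \<noteq> b\<close> by simp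
  next
    case False
    then obtain \<alpha> \<beta> where z: "z = \<alpha> *s x + \<beta> *s y" using in_span_if_triple_prod_eq_0 D by blast
    have "(\<alpha> * (a - e)) *s x + (\<beta> * (b - e)) *s y = A *v z - e *s z"
      by (simp add: z matrix_vector_right_distrib vector_scalar_commute eig vec_eq_iff algebra_simps)
    also have "\<dots> = 0" by (simp add: eig)
    finally have "\<alpha> * (a - e) = 0" "\<beta> * (b - e) = 0"
      using independent_if_cross_prod_nonzero[OF False] by blast+
    then show False using z nz assms by simp
  qed
qed

lemma parallel_if_same_eigenvalue:
  fixes A :: "'a::field^3^3"
  assumes D: "triple_prod x y z \<noteq> 0"
    and eig: "A *v x = a *s x" "A *v y = b *s y" "A *v z = e *s z" "A *v w = a *s w"
    and "a \<noteq> b" "a \<noteq> e"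
  shows "\<exists>l. w = l *s x"
proof -
  define \<alpha> \<beta> \<gamma> where "\<alpha> = triple_prod w y z" "\<beta> = triple_prod x w z" "\<gamma> = triple_prod x y w"
  have E: "triple_prod x y z *s w = \<alpha> *s x + \<beta> *s y + \<gamma> *s z"
    unfolding \<alpha>_\<beta>_\<gamma>_def by (rule triple_prod_expansion)
  have "0 *s x + (\<beta> * (b - a)) *s y + (\<gamma> * (e - a)) *s z
      = A *v (triple_prod x y z *s w) - a *s (triple_prod x y z *s w)"
    unfolding E by (simp add: matrix_vector_right_distrib vector_scalar_commute eig vec_eq_iff algebra_simps)
  also have "\<dots> = 0"
    by (simp add: vector_scalar_commute eig vector_smult_assoc mult.commute)
  finally have "\<beta> * (b - a) = 0" "\<gamma> * (e - a) = 0"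
    using independent_if_triple_prod_nonzero[OF D] by blast+
  then have "w = (\<alpha> / triple_prod x y z) *s x"
    using E D assms by (simp add: vec_eq_iff field_simps)
  then show ?thesis by blast
qed

section \<open>Frobenius twists and rational points\<close>

definition frob :: "nat \<Rightarrow> 'a::comm_semiring_1 ^ 'n \<Rightarrow> 'a ^ 'n" where
  "frob q v = (\<chi> i. v $ i ^ q)"

definition frob_mat :: "nat \<Rightarrow> 'a::comm_semiring_1 ^ 'n ^ 'm \<Rightarrow> 'a ^ 'n ^ 'm" where
  "frob_mat q A = (\<chi> i j. A $ i $ j ^ q)"

lemma frob_component [simp]: "frob q v $ i = v $ i ^ q"
  by (simp add: frob_def)

lemma frob_mat_component [simp]: "frob_mat q A $ i $ j = A $ i $ j ^ q"
  by (simp add: frob_mat_def)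

lemma frob_frob: "frob r (frob q v) = frob (q * r) v"
  by (simp add: vec_eq_iff power_mult)

lemma frob_eq_0_iff: "0 < q \<Longrightarrow> frob q v = 0 \<longleftrightarrow> v = (0 :: 'a::field ^ 'n)"
  by (simp add: vec_eq_iff)

lemma frob_smult: "frob q (c *s v) = c ^ q *s frob q v"
  by (simp add: vec_eq_iff power_mult_distrib)

lemma frob_mat_eq_self_iff: "frob_mat q A = A \<longleftrightarrow> (\<forall>i j. A $ i $ j \<in> Fq q)"
  by (simp add: vec_eq_iff Fq_def)

lemma Fq_mult: "x \<in> Fq q \<Longrightarrow> y \<in> Fq q \<Longrightarrow> x * y \<in> Fq q"
  by (simp add: Fq_def power_mult_distrib)

lemma Fq_inverse: "x \<in> Fq q \<Longrightarrow> inverse x \<in> Fq q"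
  by (simp add: Fq_def power_inverse)

lemma Fq_subset_Fq_power: "x \<in> Fq q \<Longrightarrow> x \<in> Fq (q ^ k)"
  by (induction k) (simp_all add: Fq_def power_mult)

lemma rational_pt_if_frob_parallel:
  fixes t :: "'a::field ^ 3"
  assumes "t \<noteq> 0" "frob q t = l *s t"
  shows "rational_pt q t"
proof -
  from assms(1) obtain i where i: "t $ i \<noteq> 0" by (auto simp: vec_eq_iff)
  have t: "t $ j ^ q = l * t $ j" for j
    using assms(2) by (simp add: vec_eq_iff)
  then have "l \<noteq> 0" using i by (metis mult_eq_0_iff power_not_zero)
  then have "(t $ j / t $ i) ^ q = t $ j / t $ i" for j
    using t[of i] t[of j] i by (simp add: power_divide)
  then show ?thesis
    unfolding rational_pt_def Fq_def using i by (intro exI[of _ "1 / t $ i"]) auto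
qed

lemma cross_prod_frob_nonzero_if_not_rational:
  fixes t :: "'a::field ^ 3"
  assumes "t \<noteq> 0" "\<not> rational_pt q t"
  shows "cross_prod t (frob q t) \<noteq> 0"
  using cross_prod_eq_0_imp_parallel[OF assms(1)] rational_pt_if_frob_parallel[OF assms(1)] assms(2)
  by blast

lemma rational_pt_imp_frob_fixed:
  "rational_pt q t \<Longrightarrow> \<exists>c. c \<noteq> 0 \<and> frob q (c *s t) = c *s t"
  by (auto simp: rational_pt_def Fq_def vec_eq_iff)

lemma rational_pt_smult_iff:
  fixes t :: "'a::field ^ 3"
  assumes "c \<noteq> 0"
  shows "rational_pt q (c *s t) \<longleftrightarrow> rational_pt q t"
proof
  assume "rational_pt q (c *s t)"
  then obtain d where "d \<noteq> 0" "\<forall>i. d * (c * t $ i) \<in> Fq q"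
    by (auto simp: rational_pt_def)
  then show "rational_pt q t"
    unfolding rational_pt_def using assms by (intro exI[of _ "d * c"]) (simp add: mult.assoc)
next
  assume "rational_pt q t"
  then obtain d where "d \<noteq> 0" "\<forall>i. d * t $ i \<in> Fq q"
    by (auto simp: rational_pt_def)
  then show "rational_pt q (c *s t)"
    unfolding rational_pt_def using assms by (intro exI[of _ "d / c"]) simp
qed

lemma End_t_smult:
  fixes t :: "'a::field ^ 3"
  assumes "c \<noteq> 0"
  shows "End_t p (c *s t) = End_t p t"
proof -
  have "A *v (c *s t) = l *s (c *s t) \<longleftrightarrow> A *v t = l *s t" for A :: "'a^3^3" and l
  proof -
    have "l *s (c *s t) = c *s (l *s t)"
      by (simp add: mult.commute)
    then show ?thesis
      using assms by (simp only: vector_scalar_commute vector_mul_lcancel) simp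
  qed
  then show ?thesis unfolding End_t_def by blast
qed

definition eigenvalue_at :: "'a::field ^ 'n \<Rightarrow> 'a ^ 'n ^ 'n \<Rightarrow> 'a" where
  "eigenvalue_at v A = (A *v v) $ (SOME i. v $ i \<noteq> 0) / v $ (SOME i. v $ i \<noteq> 0)"

lemma eigenvalue_at_eq:
  assumes "v \<noteq> 0" "A *v v = c *s v"
  shows "eigenvalue_at v A = c"
proof -
  have "\<exists>i. v $ i \<noteq> 0"
    using assms(1) by (simp add: vec_eq_iff)
  then have "v $ (SOME i. v $ i \<noteq> 0) \<noteq> 0"
    by (rule someI_ex)
  then show ?thesis
    using assms(2) by (simp add: eigenvalue_at_def)
qed

lemma on_fermat_imp_orthogonal_frob:
  assumes "on_fermat p t"
  shows "dot_prod (c *s t) (frob p (c *s t)) = 0"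
proof -
  have "dot_prod (c *s t) (frob p (c *s t)) = c ^ (p + 1) * (\<Sum>i\<in>UNIV. t $ i ^ (p + 1))"
    unfolding dot_prod_def sum_distrib_left
    by (rule sum.cong) (simp_all add: frob_smult power_mult_distrib mult_ac)
  then show ?thesis
    using assms by (simp add: on_fermat_def)
qed

lemma alg_closed_root_exists:
  fixes Q :: "'a::field poly"
  assumes "alg_closed TYPE('a)" "degree Q < n"
  shows "\<exists>x. x ^ n + poly Q x = 0"
proof -
  have "degree (monom 1 n + Q) = n"
    using assms(2) by (simp add: degree_add_eq_left degree_monom_eq)
  then obtain x where "poly (monom 1 n + Q) x = 0"
    using assms unfolding alg_closed_def by (metis gr_zeroI not_less_zero)
  then show ?thesis by (auto simp: poly_monom)
qed

lemma Fq_cube_conjugates_distinct: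
  assumes "c \<in> Fq (q ^ 3)" "c \<notin> Fq q"
  shows "c ^ q ^ 2 \<noteq> c" "c ^ q ^ 2 \<noteq> c ^ q"
proof -
  have pow: "(c ^ q ^ i) ^ q ^ j = c ^ q ^ (i + j)" for i j
    by (simp add: power_add power_mult)
  have c3: "c ^ q ^ 3 = c" "c ^ q \<noteq> c"
    using assms by (simp_all add: Fq_def)
  show *: "c ^ q ^ 2 \<noteq> c"
  proof
    assume "c ^ q ^ 2 = c"
    then have "c ^ q ^ 3 = c ^ q" using pow[of 2 1] by simp
    then show False using c3 by simp
  qed
  show "c ^ q ^ 2 \<noteq> c ^ q"
  proof
    assume eq: "c ^ q ^ 2 = c ^ q"
    have "c ^ q ^ 3 = (c ^ q ^ 2) ^ q ^ 1" using pow[of 2 1] by simp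
    also have "\<dots> = (c ^ q ^ 1) ^ q ^ 1" by (simp only: eq power_one_right)
    also have "\<dots> = c ^ q ^ 2" using pow[of 1 1] by (simp add: numeral_2_eq_2)
    finally show False using c3 * by simp
  qed
qed

section \<open>Matrix rings isomorphic to a field\<close>

lemma mat_matrix_vector_mult: "mat d *v v = d *s (v :: 'a::comm_semiring_1 ^ 'n)"
  by (simp add: vec_eq_iff matrix_vector_mult_def mat_def if_distrib if_distribR cong: if_cong)

lemma mat_mult_mat: "mat d ** mat e = (mat (d * e) :: 'a::comm_semiring_1 ^ 'n ^ 'n)"
  by (simp add: matrix_eq mat_matrix_vector_mult flip: matrix_vector_mul_assoc)

primrec matpow :: "'a::semiring_1 ^ 'n ^ 'n \<Rightarrow> nat \<Rightarrow> 'a ^ 'n ^ 'n" where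
  "matpow A 0 = mat 1"
| "matpow A (Suc n) = A ** matpow A n"

lemma matpow_mat: "matpow (mat d) n = (mat (d ^ n) :: 'a::comm_semiring_1 ^ 'n ^ 'n)"
  by (induction n) (simp_all add: mat_mult_mat)

lemma matpow_eigenvector:
  fixes A :: "'a::field ^ 'n ^ 'n"
  assumes "A *v v = c *s v"
  shows "matpow A n *v v = c ^ n *s v"
  by (induction n) (simp_all flip: matrix_vector_mul_assoc add: vector_scalar_commute assms mult.commute)

locale matrix_field_iso =
  fixes R :: "('a::field ^ 'n ^ 'n) set" and S :: "'a set" and \<phi> :: "'a ^ 'n ^ 'n \<Rightarrow> 'a"
  assumes bij: "bij_betw \<phi> R S"
    and hom_add: "A \<in> R \<Longrightarrow> B \<in> R \<Longrightarrow> \<phi> (A + B) = \<phi> A + \<phi> B"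
    and hom_mult: "A \<in> R \<Longrightarrow> B \<in> R \<Longrightarrow> \<phi> (A ** B) = \<phi> A * \<phi> B"
    and zero_mem: "0 \<in> R"
    and one_mem: "mat 1 \<in> R"
    and mult_mem: "A \<in> R \<Longrightarrow> B \<in> R \<Longrightarrow> A ** B \<in> R"
    and inverse_mem: "x \<in> S \<Longrightarrow> inverse x \<in> S"
begin

lemma inj: "inj_on \<phi> R" and image_eq: "\<phi> ` R = S"
  using bij by (simp_all add: bij_betw_def)

lemma hom_zero: "\<phi> 0 = 0"
  using hom_add[OF zero_mem zero_mem] by (simp only: add_0 add_cancel_right_right)

lemma hom_one: "\<phi> (mat 1) = 1"
proof -
  have "(mat 1 :: 'a ^ 'n ^ 'n) $ i $ i = 1" for i
    by (simp add: mat_def)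
  then have "(mat 1 :: 'a ^ 'n ^ 'n) \<noteq> 0"
    by (metis zero_index zero_neq_one)
  then have "\<phi> (mat 1) \<noteq> 0"
    using inj hom_zero zero_mem one_mem by (metis inj_onD)
  moreover have "\<phi> (mat 1) * \<phi> (mat 1) = \<phi> (mat 1)"
    using hom_mult[OF one_mem one_mem] by simp
  ultimately show ?thesis by simp
qed

lemma matpow_mem: "A \<in> R \<Longrightarrow> matpow A n \<in> R"
  by (induction n) (simp_all add: one_mem mult_mem)

lemma hom_matpow: "A \<in> R \<Longrightarrow> \<phi> (matpow A n) = \<phi> A ^ n"
  by (induction n) (simp_all add: hom_one hom_mult matpow_mem)

lemma right_inverse_exists:
  assumes "A \<in> R" "A \<noteq> 0"
  shows "\<exists>B\<in>R. A ** B = mat 1"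
proof -
  have "\<phi> A \<noteq> 0"
    using assms inj hom_zero zero_mem by (metis inj_onD)
  obtain B where B: "B \<in> R" "\<phi> B = inverse (\<phi> A)"
    using inverse_mem[of "\<phi> A"] image_eq assms(1) by (metis imageE imageI)
  then have "\<phi> (A ** B) = \<phi> (mat 1)"
    using \<open>\<phi> A \<noteq> 0\<close> assms(1) by (simp add: hom_mult hom_one)
  then have "A ** B = mat 1"
    using inj_onD[OF inj _ mult_mem[OF assms(1) B(1)] one_mem] by blast
  then show ?thesis using B(1) by blast
qed

end

section \<open>Prime characteristic\<close>

context
  fixes p :: nat
  assumes prime_p: "prime p" and char_p: "of_nat p = (0::'a::field)"
begin

lemma CHAR_eq: "CHAR('a) = p"
proof -
  have "CHAR('a) dvd p"
    using char_p by (simp add: of_nat_eq_0_iff_char_dvd)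
  then show ?thesis
    using prime_p CHAR_not_1 by (auto simp: prime_nat_iff)
qed

lemma add_power_prime_power: "(x + y) ^ p ^ n = x ^ p ^ n + y ^ p ^ n" for x y :: 'a
  by (rule freshmans_dream') (simp_all add: CHAR_eq prime_p)

lemma diff_power_prime_power: "(x - y) ^ p ^ n = x ^ p ^ n - y ^ p ^ n" for x y :: 'a
  using add_power_prime_power[of "x - y" y n] by simp

lemma sum_power_prime_power: "sum f A ^ p ^ n = (\<Sum>i\<in>A. f i ^ p ^ n)" for f :: "'b \<Rightarrow> 'a"
  by (rule freshmans_dream_sum') (simp_all add: CHAR_eq prime_p)

lemma Fq_add: "x \<in> Fq (p ^ n) \<Longrightarrow> y \<in> Fq (p ^ n) \<Longrightarrow> x + y \<in> Fq (p ^ n)" for x y :: 'a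
  by (simp add: Fq_def add_power_prime_power)

lemma Fq_diff: "x \<in> Fq (p ^ n) \<Longrightarrow> y \<in> Fq (p ^ n) \<Longrightarrow> x - y \<in> Fq (p ^ n)" for x y :: 'a
  by (simp add: Fq_def diff_power_prime_power)

lemma frob_add: "frob (p ^ n) (x + y) = frob (p ^ n) x + frob (p ^ n) (y :: 'a ^ 'm)"
  by (simp add: vec_eq_iff add_power_prime_power)

lemma frob_matrix_vector_mult:
  "frob (p ^ n) (A *v v) = frob_mat (p ^ n) A *v frob (p ^ n) (v :: 'a ^ 'm)"
  by (simp add: vec_eq_iff matrix_vector_mult_def sum_power_prime_power power_mult_distrib)

lemma frob_dot_prod: "dot_prod (frob (p ^ n) x) (frob (p ^ n) y) = dot_prod x (y :: 'a ^ 'm) ^ p ^ n"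
  by (simp add: dot_prod_def sum_power_prime_power power_mult_distrib)

lemma frob_cross_prod:
  "frob (p ^ n) (cross_prod x y) = cross_prod (frob (p ^ n) x) (frob (p ^ n) (y :: 'a ^ 3))"
  by (simp add: vec3_expand diff_power_prime_power power_mult_distrib)

lemma frob_eigenvector:
  assumes "frob_mat (p ^ n) A = A" "A *v v = c *s v"
  shows "A *v frob (p ^ n) v = c ^ p ^ n *s frob (p ^ n) (v :: 'a ^ 'm)"
  using frob_matrix_vector_mult[of n A v] assms by (simp add: frob_smult)

lemma mat_mem_End_t: "d \<in> Fq (p ^ 2) \<Longrightarrow> mat d \<in> End_t p (t :: 'a ^ 3)"
  using prime_gt_0_nat[OF prime_p]
  by (auto simp: End_t_def mat_def Fq_def mat_matrix_vector_mult[unfolded mat_def])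

lemma End_t_diff:
  assumes "A \<in> End_t p t" "B \<in> End_t p t"
  shows "A - B \<in> End_t p (t :: 'a ^ 3)"
proof -
  obtain a b where "A *v t = a *s t" "B *v t = b *s t"
    using assms by (auto simp: End_t_def)
  then have "(A - B) *v t = (a - b) *s t"
    by (simp add: matrix_vector_mult_diff_rdistrib vector_sub_rdistrib)
  moreover have "(A - B) $ i $ j \<in> Fq (p ^ 2)" for i j
    using assms by (simp add: End_t_def Fq_diff)
  ultimately show ?thesis
    unfolding End_t_def by blast
qed

lemma End_t_mult:
  assumes "A \<in> End_t p t" "B \<in> End_t p t"
  shows "A ** B \<in> End_t p (t :: 'a ^ 3)"
proof -
  obtain a b where "A *v t = a *s t" "B *v t = b *s t"
    using assms by (auto simp: End_t_def)
  then have "(A ** B) *v t = (b * a) *s t"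
    by (simp flip: matrix_vector_mul_assoc add: vector_scalar_commute)
  moreover have "(A ** B) $ i $ j \<in> Fq (p ^ 2)" for i j
    using assms unfolding End_t_def matrix_matrix_mult_def sum_3
    by (auto intro!: Fq_add Fq_mult)
  ultimately show ?thesis
    unfolding End_t_def by blast
qed

lemma exists_Fq6_not_Fq2:
  assumes "alg_closed TYPE('a)"
  shows "\<exists>c::'a. c \<in> Fq (p ^ 6) \<and> c \<notin> Fq (p ^ 2)"
proof -
  have "2 \<le> p" using prime_p by (simp add: prime_ge_2_nat)
  then have p: "4 \<le> p ^ 2" "p ^ 2 < p ^ 4"
    using power_mono[of 2 p 2] power_strict_increasing[of 2 4 p] by simp_all
  \<comment> \<open>take v \<noteq> 0 with v + v^{p^2} + v^{p^4} = 0 and c with c^{p^2} = c + v;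
    then c^{p^6} = c + v + v^{p^2} + v^{p^4} = c\<close>
  have "degree (monom (1::'a) (p ^ 2 - 1) + 1) < p ^ 4 - 1"
    using p by (simp add: degree_add_eq_left degree_monom_eq)
  then obtain v :: 'a where v: "v ^ (p ^ 4 - 1) + (v ^ (p ^ 2 - 1) + 1) = 0"
    using alg_closed_root_exists[OF assms] by (fastforce simp: poly_monom)
  have "v \<noteq> 0"
    using v p by (auto simp: power_0_left)
  have trace: "v + v ^ p ^ 2 + v ^ p ^ 4 = 0"
  proof -
    have "Suc (p ^ 2 - 1) = p ^ 2" "Suc (p ^ 4 - 1) = p ^ 4"
      using p by simp_all
    then have "v ^ p ^ 2 = v * v ^ (p ^ 2 - 1)" "v ^ p ^ 4 = v * v ^ (p ^ 4 - 1)"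
      by (metis power_Suc)+
    then have "v + v ^ p ^ 2 + v ^ p ^ 4 = v * (v ^ (p ^ 4 - 1) + (v ^ (p ^ 2 - 1) + 1))"
      by (simp add: algebra_simps)
    then show ?thesis
      using v by simp
  qed
  have "degree [:-v, -1:] < p ^ 2"
    using p by simp
  then obtain c :: 'a where "c ^ p ^ 2 + poly [:-v, -1:] c = 0"
    using alg_closed_root_exists[OF assms] by blast
  then have c: "c ^ p ^ 2 = c + v"
    by (simp add: algebra_simps)
  have frob2: "(x ^ p ^ 2) ^ p ^ 2 = x ^ p ^ 4" "(x ^ p ^ 4) ^ p ^ 2 = x ^ p ^ 6" for x :: 'a
    by (simp_all flip: power_mult power_add)
  have "c ^ p ^ 4 = c + v + v ^ p ^ 2"
    using frob2(1)[of c] c add_power_prime_power[where x = c and y = v and n = 2] by simp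
  then have "c ^ p ^ 6 = c + v + v ^ p ^ 2 + v ^ p ^ 4"
    using frob2[of c] frob2(1)[of v] c add_power_prime_power by simp
  then have "c ^ p ^ 6 = c"
    using trace by (simp add: algebra_simps)
  moreover have "c ^ p ^ 2 \<noteq> c"
    using c \<open>v \<noteq> 0\<close> by simp
  ultimately show ?thesis
    by (auto simp: Fq_def)
qed

lemma frob_eigenvector_Fq2:
  fixes A :: "'a ^ 3 ^ 3"
  assumes "\<forall>i j. A $ i $ j \<in> Fq (p ^ 2)" "A *v v = c *s v"
  shows "A *v frob (p ^ (2 * k)) v = c ^ p ^ (2 * k) *s frob (p ^ (2 * k)) v"
proof (rule frob_eigenvector[OF _ assms(2)])
  show "frob_mat (p ^ (2 * k)) A = A"
    using assms(1) by (simp add: frob_mat_eq_self_iff power_mult Fq_subset_Fq_power)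
qed

lemma rational_pt_if_eigenvalue_outside_Fq2:
  fixes t :: "'a ^ 3"
  assumes A: "\<forall>i j. A $ i $ j \<in> Fq (p ^ 2)" and eig: "A *v t = c *s t" and "t \<noteq> 0"
    and c: "c \<in> Fq (p ^ 6)" "c \<notin> Fq (p ^ 2)"
  shows "rational_pt (p ^ 6) t"
proof -
  note eig_k = frob_eigenvector_Fq2[OF A eig]
  have eig2: "A *v frob (p ^ 2) t = c ^ p ^ 2 *s frob (p ^ 2) t"
    using eig_k[of 1] by simp
  have eig4: "A *v frob (p ^ 4) t = c ^ p ^ 4 *s frob (p ^ 4) t"
    using eig_k[of 2] by simp
  have eig6: "A *v frob (p ^ 6) t = c *s frob (p ^ 6) t"
    using eig_k[of 3] c(1) by (simp add: Fq_def)
  have "c ^ p ^ 2 \<noteq> c" "c ^ p ^ 4 \<noteq> c" "c ^ p ^ 4 \<noteq> c ^ p ^ 2"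
    using c Fq_cube_conjugates_distinct[of c "p ^ 2"] by (simp_all add: Fq_def flip: power_mult)
  moreover have "frob (p ^ n) t \<noteq> 0" for n
    using \<open>t \<noteq> 0\<close> prime_gt_0_nat[OF prime_p] by (simp add: frob_eq_0_iff)
  ultimately have "triple_prod t (frob (p ^ 2) t) (frob (p ^ 4) t) \<noteq> 0"
    using triple_prod_nonzero_if_eigenvalues_distinct[OF eig eig2 eig4] \<open>t \<noteq> 0\<close> by metis
  then obtain l where "frob (p ^ 6) t = l *s t"
    using parallel_if_same_eigenvalue[OF _ eig eig2 eig4 eig6] \<open>c ^ p ^ 2 \<noteq> c\<close> \<open>c ^ p ^ 4 \<noteq> c\<close>
    by metis
  then show ?thesis
    using \<open>t \<noteq> 0\<close> rational_pt_if_frob_parallel by blast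
qed

lemma matrix_field_iso_End_t:
  fixes t :: "'a ^ 3"
  assumes "ring_iso_to (End_t p t) (Fq (p ^ 6))"
  obtains \<phi> where "matrix_field_iso (End_t p t) (Fq (p ^ 6)) \<phi>"
proof -
  obtain \<phi> :: "'a ^ 3 ^ 3 \<Rightarrow> 'a" where "bij_betw \<phi> (End_t p t) (Fq (p ^ 6))"
    and "\<forall>A\<in>End_t p t. \<forall>B\<in>End_t p t. \<phi> (A + B) = \<phi> A + \<phi> B \<and> \<phi> (A ** B) = \<phi> A * \<phi> B"
    using assms by (auto simp: ring_iso_to_def)
  moreover have "0 \<in> End_t p t" "mat 1 \<in> End_t p t"
    using mat_mem_End_t[of 0 t] mat_mem_End_t[of 1 t] prime_gt_0_nat[OF prime_p]
    by (simp_all add: Fq_def)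
  ultimately have "matrix_field_iso (End_t p t) (Fq (p ^ 6)) \<phi>"
    by unfold_locales (simp_all add: End_t_mult Fq_inverse)
  then show thesis by (rule that)
qed

lemma End_t_eigenvalue_in_Fq6:
  fixes t :: "'a ^ 3"
  assumes "matrix_field_iso (End_t p t) (Fq (p ^ 6)) \<phi>" and "t \<noteq> 0"
    and A: "A \<in> End_t p t" "A *v t = c *s t"
  shows "c \<in> Fq (p ^ 6)"
proof -
  interpret matrix_field_iso "End_t p t" "Fq (p ^ 6)" \<phi> by fact
  have "\<phi> A \<in> Fq (p ^ 6)"
    using image_eq A(1) by blast
  then have "\<phi> (matpow A (p ^ 6)) = \<phi> A"
    by (simp add: hom_matpow A(1) Fq_def)
  then have "matpow A (p ^ 6) = A"
    using inj_onD[OF inj _ matpow_mem A(1)] A(1) by blast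
  have "c ^ p ^ 6 *s t = matpow A (p ^ 6) *v t"
    using matpow_eigenvector[OF A(2)] by simp
  also have "\<dots> = c *s t"
    using \<open>matpow A (p ^ 6) = A\<close> A(2) by simp
  finally show ?thesis
    using \<open>t \<noteq> 0\<close> by (simp add: Fq_def)
qed

lemma End_t_annihilator_eq_0:
  fixes t :: "'a ^ 3"
  assumes "matrix_field_iso (End_t p t) (Fq (p ^ 6)) \<phi>" and "t \<noteq> 0"
    and N: "N \<in> End_t p t" "N *v t = 0"
  shows "N = 0"
proof (rule ccontr)
  interpret matrix_field_iso "End_t p t" "Fq (p ^ 6)" \<phi> by fact
  assume "N \<noteq> 0"
  then obtain M where M: "M \<in> End_t p t" "N ** M = mat 1"
    using right_inverse_exists N(1) by blast
  then obtain m where "M *v t = m *s t"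
    by (auto simp: End_t_def)
  then have "t = m *s (N *v t)"
    by (metis M(2) matrix_vector_mul_assoc matrix_vector_mul_lid vector_scalar_commute)
  then show False
    using N(2) \<open>t \<noteq> 0\<close> by simp
qed

lemma End_t_has_eigenvalue_outside_Fq2:
  fixes t :: "'a ^ 3"
  assumes "alg_closed TYPE('a)" and iso: "matrix_field_iso (End_t p t) (Fq (p ^ 6)) \<phi>"
    and "t \<noteq> 0"
  shows "\<exists>A c. A \<in> End_t p t \<and> A *v t = c *s t \<and> c \<notin> Fq (p ^ 2)"
proof -
  interpret matrix_field_iso "End_t p t" "Fq (p ^ 6)" \<phi> by fact
  obtain c0 :: 'a where c0: "c0 \<in> Fq (p ^ 6)" "c0 \<notin> Fq (p ^ 2)"
    using exists_Fq6_not_Fq2[OF assms(1)] by blast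
  then obtain M where M: "M \<in> End_t p t" "\<phi> M = c0"
    using image_eq by (metis imageE)
  then obtain d where d: "M *v t = d *s t"
    by (auto simp: End_t_def)
  have "d \<notin> Fq (p ^ 2)"
  proof
    assume d2: "d \<in> Fq (p ^ 2)"
    then have "M - mat d \<in> End_t p t"
      using End_t_diff mat_mem_End_t M(1) by blast
    moreover have "(M - mat d) *v t = 0"
      by (simp add: d matrix_vector_mult_diff_rdistrib mat_matrix_vector_mult)
    ultimately have "M - mat d = 0"
      by (rule End_t_annihilator_eq_0[OF iso \<open>t \<noteq> 0\<close>])
    then have "M = mat d"
      by simp
    then have "matpow M (p ^ 2) = M"
      using d2 by (simp add: matpow_mat Fq_def)
    then have "c0 ^ p ^ 2 = c0"
      using hom_matpow[OF M(1)] M(2) by metis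
    then show False
      using c0(2) by (simp add: Fq_def)
  qed
  then show ?thesis
    using M(1) d by blast
qed

lemma rational_pt_if_ring_iso_Fq6:
  fixes t :: "'a ^ 3"
  assumes "alg_closed TYPE('a)" "t \<noteq> 0" "ring_iso_to (End_t p t) (Fq (p ^ 6))"
  shows "rational_pt (p ^ 6) t"
proof -
  obtain \<phi> where iso: "matrix_field_iso (End_t p t) (Fq (p ^ 6)) \<phi>"
    using matrix_field_iso_End_t assms(3) by blast
  obtain A c where A: "A \<in> End_t p t" "A *v t = c *s t" and "c \<notin> Fq (p ^ 2)"
    using End_t_has_eigenvalue_outside_Fq2[OF assms(1) iso assms(2)] by blast
  moreover have "c \<in> Fq (p ^ 6)"
    using End_t_eigenvalue_in_Fq6[OF iso assms(2) A] .
  ultimately show ?thesis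
    using rational_pt_if_eigenvalue_outside_Fq2 assms(2) by (auto simp: End_t_def)
qed

lemma frob_orbit_orthogonal:
  assumes "dot_prod t (frob p t) = 0"
  shows "dot_prod (frob (p ^ j) t) (frob (p ^ Suc j) t) = (0::'a)"
proof -
  have "frob (p ^ Suc j) t = frob (p ^ j) (frob p t)"
    by (simp add: frob_frob mult.commute)
  then show ?thesis
    using frob_dot_prod[of j t "frob p t"] assms prime_gt_0_nat[OF prime_p] by simp
qed

lemma frob_orbit_triple_prod_nonzero:
  fixes t :: "'a ^ 3"
  assumes "t \<noteq> 0" "dot_prod t (frob p t) = 0" "\<not> rational_pt (p ^ 2) t" "frob (p ^ 6) t = t"
  shows "triple_prod t (frob (p ^ 2) t) (frob (p ^ 4) t) \<noteq> 0"
proof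
  define u where "u j = frob (p ^ j) t" for j
  have shift: "frob (p ^ m) (u j) = u (j + m)" for j m
    by (simp add: u_def frob_frob power_add)
  have u0: "u 0 = t" and u6: "u 6 = t"
    using assms(4) by (simp_all add: u_def vec_eq_iff)
  have nz: "u j \<noteq> 0" for j
    using assms(1) prime_gt_0_nat[OF prime_p] by (simp add: u_def frob_eq_0_iff)
  have orth: "dot_prod (u j) (u k) = 0" if "k = j + 1" for j k
    using frob_orbit_orthogonal[OF assms(2)] that by (simp add: u_def)
  assume "triple_prod t (frob (p ^ 2) t) (frob (p ^ 4) t) = 0"
  then have D: "triple_prod (u 0) (u 2) (u 4) = 0"
    unfolding u0 by (simp add: u_def)
  have c02: "cross_prod (u 0) (u 2) \<noteq> 0"
    using cross_prod_frob_nonzero_if_not_rational[OF assms(1,3)] u0 by (simp add: u_def)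
  then obtain a b where u4: "u 4 = a *s u 0 + b *s u 2"
    using in_span_if_triple_prod_eq_0 D by blast
  have u5: "u 5 = a ^ p *s u 1 + b ^ p *s u 3"
  proof -
    have "u 5 = frob p (u 4)"
      using shift[of 1 4] by simp
    then show ?thesis
      using shift[of 1 0] shift[of 1 2] by (simp add: u4 frob_smult frob_add[where n = 1, simplified])
  qed
  have "dot_prod (u 0) (u 3) = 0"
  proof (rule ccontr)
    assume ne: "dot_prod (u 0) (u 3) \<noteq> 0"
    have "dot_prod (u 3) (u 4) = 0"
      by (simp add: orth)
    then have "a * dot_prod (u 0) (u 3) = 0"
      using dot_prod_commute[of "u 3" "u 0"] dot_prod_commute[of "u 3" "u 2"]
      by (simp add: u4 dot_prod_add_smult_right orth)
    moreover have "dot_prod (u 5) (u 0) = 0"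
      using orth[where j = 5 and k = 6] u0 u6 by simp
    then have "b ^ p * dot_prod (u 0) (u 3) = 0"
      using dot_prod_commute[of "u 5" "u 0"] by (simp add: u5 dot_prod_add_smult_right orth)
    ultimately have "u 4 = 0"
      using ne by (simp add: u4)
    then show False using nz by blast
  qed
  \<comment> \<open>so u 1 and u 3 are orthogonal to the independent u 0 and u 2, hence parallel, although
    they are the Frobenius images of u 0 and u 2\<close>
  then have "cross_prod (u 1) (u 3) = 0"
    using cross_prod_eq_0_if_orthogonal[OF c02] dot_prod_commute[of "u 1" "u 2"] by (simp add: orth)
  moreover have "cross_prod (u 1) (u 3) = frob p (cross_prod (u 0) (u 2))"
    using shift[of 1 0] shift[of 1 2] by (simp add: frob_cross_prod[where n = 1, simplified])
  ultimately show False
    using c02 prime_gt_0_nat[OF prime_p] by (simp add: frob_eq_0_iff)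
qed

lemma End_t_mem_iff_conjugate_eigenvalues:
  fixes t :: "'a ^ 3"
  assumes basis: "triple_prod t (frob (p ^ 2) t) (frob (p ^ 4) t) \<noteq> 0"
    and fixed: "frob (p ^ 6) t = t"
  shows "A \<in> End_t p t \<longleftrightarrow> (\<exists>c\<in>Fq (p ^ 6). A *v t = c *s t
    \<and> A *v frob (p ^ 2) t = c ^ p ^ 2 *s frob (p ^ 2) t \<and> A *v frob (p ^ 4) t = c ^ p ^ 4 *s frob (p ^ 4) t)"
proof
  assume "A \<in> End_t p t"
  then obtain c where A: "\<forall>i j. A $ i $ j \<in> Fq (p ^ 2)" and eig: "A *v t = c *s t"
    by (auto simp: End_t_def)
  note eig_k = frob_eigenvector_Fq2[OF A eig]
  have "t \<noteq> 0"
    using basis by (auto simp: triple_prod_def)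
  then have "c \<in> Fq (p ^ 6)"
    using eig_k[of 3] eig fixed by (simp add: Fq_def)
  then show "\<exists>c\<in>Fq (p ^ 6). A *v t = c *s t
    \<and> A *v frob (p ^ 2) t = c ^ p ^ 2 *s frob (p ^ 2) t \<and> A *v frob (p ^ 4) t = c ^ p ^ 4 *s frob (p ^ 4) t"
    using eig eig_k[of 1] eig_k[of 2] by auto
next
  assume "\<exists>c\<in>Fq (p ^ 6). A *v t = c *s t
    \<and> A *v frob (p ^ 2) t = c ^ p ^ 2 *s frob (p ^ 2) t \<and> A *v frob (p ^ 4) t = c ^ p ^ 4 *s frob (p ^ 4) t"
  then obtain c where c: "c ^ p ^ 6 = c" and eig0: "A *v t = c *s t"
    and eig2: "A *v frob (p ^ 2) t = c ^ p ^ 2 *s frob (p ^ 2) t"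
    and eig4: "A *v frob (p ^ 4) t = c ^ p ^ 4 *s frob (p ^ 4) t"
    by (auto simp: Fq_def)
  \<comment> \<open>the Frobenius twist of A has the same eigenvectors and eigenvalues, so it equals A\<close>
  have twist: "frob_mat (p ^ 2) A *v frob (p ^ 2) v = d ^ p ^ 2 *s frob (p ^ 2) v"
    if "A *v v = d *s v" for v d
    using frob_matrix_vector_mult[of 2 A v] that by (simp add: frob_smult)
  have pow: "(x ^ p ^ 2) ^ p ^ 2 = x ^ p ^ 4" "(x ^ p ^ 4) ^ p ^ 2 = x ^ p ^ 6"
    "frob (p ^ 2) (frob (p ^ 2) t) = frob (p ^ 4) t" "frob (p ^ 2) (frob (p ^ 4) t) = frob (p ^ 6) t"
    for x :: 'a
    by (simp_all add: frob_frob flip: power_mult power_add)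
  have "frob_mat (p ^ 2) A = A"
    by (rule matrix_eq_if_triple_prod_nonzero[OF basis])
      (use twist[OF eig0] twist[OF eig2] twist[OF eig4] pow c fixed
        eig0 eig2 eig4 in simp_all)
  then show "A \<in> End_t p t"
    using eig0 by (auto simp: End_t_def frob_mat_eq_self_iff)
qed

lemma ring_iso_to_End_t_if_basis:
  fixes t :: "'a ^ 3"
  assumes basis: "triple_prod t (frob (p ^ 2) t) (frob (p ^ 4) t) \<noteq> 0"
    and fixed: "frob (p ^ 6) t = t"
  shows "ring_iso_to (End_t p t) (Fq (p ^ 6))"
proof -
  note mem_iff = End_t_mem_iff_conjugate_eigenvalues[OF basis fixed]
  have "t \<noteq> 0"
    using basis by (auto simp: triple_prod_def)
  note eigenvalue = eigenvalue_at_eq[OF this]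
  have inj: "inj_on (eigenvalue_at t) (End_t p t)"
  proof (rule inj_onI)
    fix A B assume "A \<in> End_t p t" "B \<in> End_t p t" "eigenvalue_at t A = eigenvalue_at t B"
    then show "A = B"
      using mem_iff eigenvalue matrix_eq_if_triple_prod_nonzero[OF basis] by metis
  qed
  have "eigenvalue_at t ` End_t p t = Fq (p ^ 6)"
  proof
    show "eigenvalue_at t ` End_t p t \<subseteq> Fq (p ^ 6)"
      using mem_iff eigenvalue by force
    show "Fq (p ^ 6) \<subseteq> eigenvalue_at t ` End_t p t"
    proof
      fix c :: 'a assume "c \<in> Fq (p ^ 6)"
      moreover obtain A where "A *v t = c *s t" "A *v frob (p ^ 2) t = c ^ p ^ 2 *s frob (p ^ 2) t"
        "A *v frob (p ^ 4) t = c ^ p ^ 4 *s frob (p ^ 4) t"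
        using exists_matrix_with_eigenbasis[OF basis] by blast
      ultimately show "c \<in> eigenvalue_at t ` End_t p t"
        using mem_iff eigenvalue by (metis imageI)
    qed
  qed
  moreover have "eigenvalue_at t (A + B) = eigenvalue_at t A + eigenvalue_at t B"
    "eigenvalue_at t (A ** B) = eigenvalue_at t A * eigenvalue_at t B"
    if AB: "A \<in> End_t p t" "B \<in> End_t p t" for A B
  proof -
    obtain a b where a: "A *v t = a *s t" and b: "B *v t = b *s t"
      using AB by (auto simp: End_t_def)
    have sum: "(A + B) *v t = (a + b) *s t"
      by (simp add: a b matrix_vector_mult_add_rdistrib vector_sadd_rdistrib)
    have prod: "(A ** B) *v t = (a * b) *s t"
      by (simp add: a b vector_scalar_commute mult.commute flip: matrix_vector_mul_assoc)
    show "eigenvalue_at t (A + B) = eigenvalue_at t A + eigenvalue_at t B"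
      "eigenvalue_at t (A ** B) = eigenvalue_at t A * eigenvalue_at t B"
      unfolding eigenvalue[OF sum] eigenvalue[OF prod] eigenvalue[OF a] eigenvalue[OF b] by simp_all
  qed
  ultimately show ?thesis
    unfolding ring_iso_to_def bij_betw_def using inj by blast
qed

end

theorem lemma3p13:
  fixes p :: nat and t :: "'a::field ^ 3"
  assumes "alg_closed TYPE('a)"
    and "prime p" and "of_nat p = (0::'a)"
    and "C0 p t"
  shows "ring_iso_to (End_t p t) (Fq (p ^ 6)) \<longleftrightarrow> rational_pt (p ^ 6) t"
proof -
  have "t \<noteq> 0" and fermat: "on_fermat p t" and not_rational: "\<not> rational_pt (p ^ 2) t"
    using assms(4) by (auto simp: C0_def on_fermat_def)
  show ?thesis
  proof
    assume "ring_iso_to (End_t p t) (Fq (p ^ 6))"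
    then show "rational_pt (p ^ 6) t"
      using rational_pt_if_ring_iso_Fq6[OF assms(2,3,1) \<open>t \<noteq> 0\<close>] by blast
  next
    assume "rational_pt (p ^ 6) t"
    then obtain c where "c \<noteq> 0" and fixed: "frob (p ^ 6) (c *s t) = c *s t"
      using rational_pt_imp_frob_fixed by blast
    have "triple_prod (c *s t) (frob (p ^ 2) (c *s t)) (frob (p ^ 4) (c *s t)) \<noteq> 0"
      using frob_orbit_triple_prod_nonzero[OF assms(2,3) _ on_fermat_imp_orthogonal_frob[OF fermat] _ fixed]
        \<open>t \<noteq> 0\<close> \<open>c \<noteq> 0\<close> not_rational by (simp add: rational_pt_smult_iff)
    then have "ring_iso_to (End_t p (c *s t)) (Fq (p ^ 6))"
      using ring_iso_to_End_t_if_basis[OF assms(2,3) _ fixed] by blast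
    then show "ring_iso_to (End_t p t) (Fq (p ^ 6))"
      using End_t_smult[OF \<open>c \<noteq> 0\<close>] by simp
  qed
qed

end
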